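(* Let $L$ be a distributive lattice and $l\in L$. Then $|\delta_l|$ is a weak order unit of $\mathrm{FBL}\langle L\rangle$: if $f\in\mathrm{FBL}\langle L\rangle$ satisfies $|f|\wedge|\delta_l|=0$, then $f=0$.
   Context: $L^*$ is the set of all lattice homomorphisms $x^*:L\to[-1,1]$ (a subset of $\mathbb R^L$ with the product topology); for $x\in L$, $\delta_x:L^*\to\mathbb R$ is $\delta_x(x^* )=x^*(x)$. A function $f:L^*\to\mathbb R$ is positively homogeneous if $f(\lambda x^* )=\lambda f(x^* )$ whenever $\lambda\ge0$ and $\lambda x^*\in L^*$; for such $f$, $\|f\|=\sup\{\sum_{i=1}^m|f(x_i^* )|: m\in\mathbb N,\ x_i^*\in L^*,\ \sup_{x\in L}\sum_{i=1}^m|x_i^*(x)|\le1\}$. $\mathrm{FBL}\langle L\rangle$ is the norm closure of the vector sublattice generated by $\{\delta_x:x\in L\}$ inside the Banach lattice of positively homogeneous functions on $L^*$ with finite norm, with pointwise order and operations. *)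

theory Defs
  imports Complex_Main
begin

definition lat_dual :: "('a::distrib_lattice \<Rightarrow> real) set" where
  "lat_dual = {xs. (\<forall>a b. xs (inf a b) = min (xs a) (xs b)) \<and>
                   (\<forall>a b. xs (sup a b) = max (xs a) (xs b)) \<and>
                   (\<forall>a. \<bar>xs a\<bar> \<le> 1)}"

text \<open>Functions on L^* are represented as functions on all of 'a => real that vanish
  outside L^*.\<close>
definition delta :: "'a::distrib_lattice \<Rightarrow> (('a \<Rightarrow> real) \<Rightarrow> real)" where
  "delta l = (\<lambda>xs. if xs \<in> lat_dual then xs l else 0)"

definition pos_homog :: "(('a::distrib_lattice \<Rightarrow> real) \<Rightarrow> real) \<Rightarrow> bool" where
  "pos_homog f \<longleftrightarrow> (\<forall>c xs. c \<ge> 0 \<longrightarrow> xs \<in> lat_dual \<longrightarrow> (\<lambda>a. c * xs a) \<in> lat_dual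
       \<longrightarrow> f (\<lambda>a. c * xs a) = c * f xs)"

definition fbl_sums :: "(('a::distrib_lattice \<Rightarrow> real) \<Rightarrow> real) \<Rightarrow> real set" where
  "fbl_sums f = {(\<Sum>i<m. \<bar>f (xs i)\<bar>) | (m::nat) xs.
      (\<forall>i<m. xs i \<in> lat_dual) \<and> (\<forall>a. (\<Sum>i<m. \<bar>xs i a\<bar>) \<le> 1)}"

definition fbl_norm :: "(('a::distrib_lattice \<Rightarrow> real) \<Rightarrow> real) \<Rightarrow> real" where
  "fbl_norm f = Sup (fbl_sums f)"

definition PH :: "(('a::distrib_lattice \<Rightarrow> real) \<Rightarrow> real) set" where
  "PH = {f. (\<forall>xs. xs \<notin> lat_dual \<longrightarrow> f xs = 0) \<and> pos_homog f \<and> bdd_above (fbl_sums f)}"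

inductive_set fbl_gen :: "(('a::distrib_lattice \<Rightarrow> real) \<Rightarrow> real) set" where
  gen_delta: "delta x \<in> fbl_gen"
| gen_add: "f \<in> fbl_gen \<Longrightarrow> g \<in> fbl_gen \<Longrightarrow> (\<lambda>xs. f xs + g xs) \<in> fbl_gen"
| gen_scale: "f \<in> fbl_gen \<Longrightarrow> (\<lambda>xs. c * f xs) \<in> fbl_gen"
| gen_sup: "f \<in> fbl_gen \<Longrightarrow> g \<in> fbl_gen \<Longrightarrow> (\<lambda>xs. max (f xs) (g xs)) \<in> fbl_gen"
| gen_inf: "f \<in> fbl_gen \<Longrightarrow> g \<in> fbl_gen \<Longrightarrow> (\<lambda>xs. min (f xs) (g xs)) \<in> fbl_gen"

definition FBL :: "(('a::distrib_lattice \<Rightarrow> real) \<Rightarrow> real) set" where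
  "FBL = {f \<in> PH. \<forall>e>0. \<exists>g\<in>fbl_gen. fbl_norm (\<lambda>xs. f xs - g xs) < e}"

end

theory Submission
  imports Defs
begin

text \<open>Every element of the generated sublattice depends Lipschitz-continuously on finitely many
  coordinates of \<open>x\<^sup>*\<close>, so every element of \<open>FBL\<langle>L\<rangle>\<close>, being a norm limit of such functions,
  is uniformly continuous on \<open>L\<^sup>*\<close> for the sup-distance. If \<open>f(x\<^sup>*) \<noteq> 0\<close>, then \<open>x\<^sup>*(l) = 0\<close>;
  truncating \<open>x\<^sup>* + e\<close> to \<open>[-1,1]\<close> gives a point \<open>y\<^sup>*\<close> of \<open>L\<^sup>*\<close> uniformly \<open>e\<close>-close to \<open>x\<^sup>*\<close> with
  \<open>y\<^sup>*(l) = e \<noteq> 0\<close>, hence \<open>f(y\<^sup>*) = 0\<close>, which contradicts continuity for small \<open>e\<close>.\<close>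

definition lipschitz_on_coords :: "'a set \<Rightarrow> real \<Rightarrow> (('a::distrib_lattice \<Rightarrow> real) \<Rightarrow> real) \<Rightarrow> bool"
  where "lipschitz_on_coords S c g \<longleftrightarrow> finite S \<and> 0 \<le> c \<and>
    (\<forall>x\<in>lat_dual. \<forall>y\<in>lat_dual. \<bar>g x - g y\<bar> \<le> c * (\<Sum>a\<in>S. \<bar>x a - y a\<bar>))"

lemma lipschitz_on_coords_mono:
  assumes "lipschitz_on_coords S c g" "S \<subseteq> T" "finite T" "c \<le> d"
  shows "lipschitz_on_coords T d g"
  unfolding lipschitz_on_coords_def
proof (intro conjI ballI)
  fix x y :: "'a \<Rightarrow> real" assume "x \<in> lat_dual" "y \<in> lat_dual"
  then have "\<bar>g x - g y\<bar> \<le> c * (\<Sum>a\<in>S. \<bar>x a - y a\<bar>)"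
    using assms(1) by (simp add: lipschitz_on_coords_def)
  also have "\<dots> \<le> d * (\<Sum>a\<in>T. \<bar>x a - y a\<bar>)"
    using assms by (intro mult_mono sum_mono2) (auto simp: lipschitz_on_coords_def intro: sum_nonneg)
  finally show "\<bar>g x - g y\<bar> \<le> d * (\<Sum>a\<in>T. \<bar>x a - y a\<bar>)" .
qed (use assms in \<open>auto simp: lipschitz_on_coords_def\<close>)

lemma lipschitz_on_coords_combine:
  assumes f: "lipschitz_on_coords S c f" and g: "lipschitz_on_coords T d g"
    and \<phi>: "\<And>u v u' v'. \<bar>\<phi> u v - \<phi> u' v'\<bar> \<le> \<bar>u - u'\<bar> + \<bar>v - v'\<bar>"
  shows "lipschitz_on_coords (S \<union> T) (c + d) (\<lambda>x. \<phi> (f x) (g x))"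
proof -
  have fin: "finite (S \<union> T)" and nonneg: "0 \<le> c" "0 \<le> d"
    using f g by (auto simp: lipschitz_on_coords_def)
  have f': "lipschitz_on_coords (S \<union> T) c f" and g': "lipschitz_on_coords (S \<union> T) d g"
    using lipschitz_on_coords_mono[OF f _ fin] lipschitz_on_coords_mono[OF g _ fin] by auto
  show ?thesis
    unfolding lipschitz_on_coords_def
  proof (intro conjI ballI)
    fix x y :: "'a \<Rightarrow> real" assume "x \<in> lat_dual" "y \<in> lat_dual"
    then have "\<bar>f x - f y\<bar> + \<bar>g x - g y\<bar> \<le> (c + d) * (\<Sum>a\<in>S \<union> T. \<bar>x a - y a\<bar>)"
      using f' g' by (auto simp: lipschitz_on_coords_def distrib_right intro: add_mono)
    then show "\<bar>\<phi> (f x) (g x) - \<phi> (f y) (g y)\<bar> \<le> (c + d) * (\<Sum>a\<in>S \<union> T. \<bar>x a - y a\<bar>)"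
      using \<phi> order_trans by blast
  qed (use fin nonneg in auto)
qed

lemma lipschitz_on_coords_scale:
  assumes "lipschitz_on_coords S c f"
  shows "lipschitz_on_coords S (\<bar>k\<bar> * c) (\<lambda>x. k * f x)"
  using assms unfolding lipschitz_on_coords_def
  by (auto simp: abs_mult mult.assoc right_diff_distrib[symmetric] intro: mult_left_mono)

lemma fbl_gen_lipschitz_on_coords:
  assumes "g \<in> fbl_gen"
  shows "g (\<lambda>_. 0) = 0 \<and> (\<exists>S c. lipschitz_on_coords S c g)"
  using assms
proof induction
  case (gen_delta z)
  have "lipschitz_on_coords {z} 1 (delta z)"
    by (simp add: lipschitz_on_coords_def delta_def)
  moreover have "(\<lambda>_. 0 :: real) \<in> lat_dual"
    by (simp add: lat_dual_def)
  ultimately show ?case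
    by (auto simp: delta_def)
next
  case (gen_scale f k)
  then show ?case
    using lipschitz_on_coords_scale by fastforce
next
  case (gen_add f g)
  then show ?case
    using lipschitz_on_coords_combine[where \<phi> = "(+)"] by fastforce
next
  case (gen_sup f g)
  then show ?case
    using lipschitz_on_coords_combine[where \<phi> = max] by (fastforce simp: abs_le_iff)
next
  case (gen_inf f g)
  then show ?case
    using lipschitz_on_coords_combine[where \<phi> = min] by (fastforce simp: abs_le_iff)
qed

lemma fbl_sumsE:
  assumes "s \<in> fbl_sums f"
  obtains m :: nat and xs where "s = (\<Sum>i<m. \<bar>f (xs i)\<bar>)" "\<forall>i<m. xs i \<in> lat_dual"
    "\<forall>a. (\<Sum>i<m. \<bar>xs i a\<bar>) \<le> 1"
  using assms unfolding fbl_sums_def by blast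

lemma fbl_sumsI:
  fixes m :: nat
  assumes "\<forall>i<m. xs i \<in> lat_dual" "\<forall>a. (\<Sum>i<m. \<bar>xs i a\<bar>) \<le> 1"
  shows "(\<Sum>i<m. \<bar>f (xs i)\<bar>) \<in> fbl_sums f"
  using assms unfolding fbl_sums_def by blast

lemma bdd_above_fbl_sums_fbl_gen:
  assumes "g \<in> fbl_gen"
  shows "bdd_above (fbl_sums g)"
proof -
  obtain S c where Sc: "lipschitz_on_coords S c g" and g0: "g (\<lambda>_. 0) = 0"
    using fbl_gen_lipschitz_on_coords[OF assms] by blast
  have "(\<lambda>_. 0 :: real) \<in> lat_dual"
    by (simp add: lat_dual_def)
  then have g_le: "\<bar>g x\<bar> \<le> c * (\<Sum>a\<in>S. \<bar>x a\<bar>)" if "x \<in> lat_dual" for x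
    using Sc g0 that unfolding lipschitz_on_coords_def by fastforce
  have "s \<le> c * card S" if s_mem: "s \<in> fbl_sums g" for s
  proof -
    obtain m :: nat and xs where s: "s = (\<Sum>i<m. \<bar>g (xs i)\<bar>)" and xs: "\<forall>i<m. xs i \<in> lat_dual"
      and sum_le: "\<forall>a. (\<Sum>i<m. \<bar>xs i a\<bar>) \<le> 1"
      using fbl_sumsE[OF s_mem] by blast
    have "s \<le> (\<Sum>i<m. c * (\<Sum>a\<in>S. \<bar>xs i a\<bar>))"
      unfolding s using g_le xs by (intro sum_mono) auto
    also have "\<dots> = c * (\<Sum>a\<in>S. \<Sum>i<m. \<bar>xs i a\<bar>)"
      by (simp add: sum_distrib_left sum.swap[of _ S])
    also have "\<dots> \<le> c * (\<Sum>a\<in>S. 1)"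
      using Sc sum_le by (intro mult_left_mono sum_mono) (auto simp: lipschitz_on_coords_def)
    finally show ?thesis
      by simp
  qed
  then show ?thesis
    by (rule bdd_aboveI)
qed

lemma bdd_above_fbl_sums_diff:
  assumes "bdd_above (fbl_sums f)" "bdd_above (fbl_sums g)"
  shows "bdd_above (fbl_sums (\<lambda>x. f x - g x))"
proof -
  obtain Bf Bg where Bf: "\<forall>s\<in>fbl_sums f. s \<le> Bf" and Bg: "\<forall>s\<in>fbl_sums g. s \<le> Bg"
    using assms unfolding bdd_above_def by blast
  have "s \<le> Bf + Bg" if s_mem: "s \<in> fbl_sums (\<lambda>x. f x - g x)" for s
  proof -
    obtain m :: nat and xs where s: "s = (\<Sum>i<m. \<bar>f (xs i) - g (xs i)\<bar>)" and xs: "\<forall>i<m. xs i \<in> lat_dual"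
      "\<forall>a. (\<Sum>i<m. \<bar>xs i a\<bar>) \<le> 1"
      using fbl_sumsE[OF s_mem] by blast
    have "s \<le> (\<Sum>i<m. \<bar>f (xs i)\<bar>) + (\<Sum>i<m. \<bar>g (xs i)\<bar>)"
      unfolding s sum.distrib[symmetric] by (intro sum_mono abs_triangle_ineq4)
    also have "\<dots> \<le> Bf + Bg"
      using Bf Bg fbl_sumsI[OF xs] by (intro add_mono) auto
    finally show ?thesis .
  qed
  then show ?thesis
    by (rule bdd_aboveI)
qed

lemma abs_le_fbl_norm:
  assumes "bdd_above (fbl_sums h)" "x \<in> lat_dual"
  shows "\<bar>h x\<bar> \<le> fbl_norm h"
proof -
  have "\<forall>a. \<bar>x a\<bar> \<le> 1"
    using assms(2) unfolding lat_dual_def by blast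
  then have "\<bar>h x\<bar> \<in> fbl_sums h"
    using assms(2) fbl_sumsI[of 1 "\<lambda>_. x" h] by simp
  then show ?thesis
    unfolding fbl_norm_def using assms(1) by (simp add: cSup_upper)
qed

lemma FBL_uniformly_continuous:
  assumes "f \<in> FBL" "\<epsilon> > 0"
  obtains \<delta> where "\<delta> > 0" "\<And>x y. x \<in> lat_dual \<Longrightarrow> y \<in> lat_dual \<Longrightarrow>
    (\<forall>a. \<bar>x a - y a\<bar> \<le> \<delta>) \<Longrightarrow> \<bar>f x - f y\<bar> < \<epsilon>"
proof -
  have "\<epsilon> / 3 > 0"
    using assms(2) by simp
  then obtain g where g: "g \<in> fbl_gen" and close: "fbl_norm (\<lambda>x. f x - g x) < \<epsilon> / 3"
    using assms(1) unfolding FBL_def by blast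
  obtain S c where Sc: "lipschitz_on_coords S c g"
    using fbl_gen_lipschitz_on_coords[OF g] by blast
  have "bdd_above (fbl_sums f)"
    using assms(1) by (simp add: FBL_def PH_def)
  then have fg_le: "\<bar>f x - g x\<bar> < \<epsilon> / 3" if "x \<in> lat_dual" for x
    using abs_le_fbl_norm[OF bdd_above_fbl_sums_diff that] bdd_above_fbl_sums_fbl_gen[OF g] close
    by fastforce
  define K where "K = c * card S + 1"
  have K: "K > 0"
    using Sc by (simp add: K_def lipschitz_on_coords_def add_nonneg_pos)
  show ?thesis
  proof
    show "\<epsilon> / (3 * K) > 0"
      using K assms(2) by simp
    fix x y :: "'a \<Rightarrow> real" assume x: "x \<in> lat_dual" and y: "y \<in> lat_dual"
      and xy: "\<forall>a. \<bar>x a - y a\<bar> \<le> \<epsilon> / (3 * K)"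
    have "\<bar>g x - g y\<bar> \<le> c * (\<Sum>a\<in>S. \<bar>x a - y a\<bar>)"
      using Sc x y by (simp add: lipschitz_on_coords_def)
    also have "\<dots> \<le> c * (\<Sum>a\<in>S. \<epsilon> / (3 * K))"
      using Sc xy by (intro mult_left_mono sum_mono) (auto simp: lipschitz_on_coords_def)
    also have "\<dots> = c * card S * (\<epsilon> / (3 * K))"
      by simp
    also have "\<dots> \<le> K * (\<epsilon> / (3 * K))"
      using assms(2) K by (intro mult_right_mono) (auto simp: K_def)
    also have "\<dots> = \<epsilon> / 3"
      using K by simp
    finally show "\<bar>f x - f y\<bar> < \<epsilon>"
      using fg_le[OF x] fg_le[OF y] by linarith
  qed
qed

lemma lat_dual_mono_comp:
  assumes "x \<in> lat_dual" "mono \<phi>" "\<And>t. \<bar>\<phi> t\<bar> \<le> 1"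
  shows "(\<lambda>a. \<phi> (x a)) \<in> lat_dual"
  using assms by (simp add: lat_dual_def min_of_mono max_of_mono)

theorem mainTheorem13:
  fixes l :: "'a::distrib_lattice" and f :: "('a \<Rightarrow> real) \<Rightarrow> real"
  assumes "f \<in> FBL"
    and "\<forall>xs. min \<bar>f xs\<bar> \<bar>delta l xs\<bar> = 0"
  shows "f = (\<lambda>xs. 0)"
proof (rule ext, rule ccontr)
  fix x assume fx: "f x \<noteq> 0"
  then have x: "x \<in> lat_dual"
    using assms(1) by (auto simp: FBL_def PH_def)
  have "min \<bar>f x\<bar> \<bar>delta l x\<bar> = 0"
    using assms(2) by blast
  then have xl: "x l = 0"
    using x fx by (simp add: delta_def)
  obtain \<delta> where \<delta>: "\<delta> > 0" and cont: "\<And>u v. u \<in> lat_dual \<Longrightarrow> v \<in> lat_dual \<Longrightarrow>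
      (\<forall>a. \<bar>u a - v a\<bar> \<le> \<delta>) \<Longrightarrow> \<bar>f u - f v\<bar> < \<bar>f x\<bar>"
    using FBL_uniformly_continuous[OF assms(1)] fx by (metis zero_less_abs_iff)
  define e where "e = min 1 \<delta>"
  define y where "y = (\<lambda>a. max (-1) (min 1 (x a + e)))"
  have y: "y \<in> lat_dual"
    unfolding y_def by (rule lat_dual_mono_comp[OF x]) (auto simp: mono_def)
  have "y l = e"
    using xl \<delta> by (simp add: y_def e_def)
  moreover have "min \<bar>f y\<bar> \<bar>delta l y\<bar> = 0"
    using assms(2) by blast
  ultimately have "f y = 0"
    using y \<delta> by (simp add: delta_def e_def)
  moreover have "\<forall>a. \<bar>x a - y a\<bar> \<le> \<delta>"
  proof
    fix a
    have "\<bar>x a\<bar> \<le> 1"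
      using x by (simp add: lat_dual_def)
    then show "\<bar>x a - y a\<bar> \<le> \<delta>"
      using \<delta> by (simp add: y_def e_def abs_le_iff min_def max_def)
  qed
  ultimately show False
    using cont[OF x y] by simp
qed

end
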